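(* Let $0<p<2$. For each $N\ge 2$ let $X_N=\{x_1,\dots,x_N\}\in S(N,2)$ be a minimizer of $\mathrm{FP}_{p,N,2}$ over $S(N,2)$, and regard $X_N$ as the $2\times N$ matrix whose columns are $x_1,\dots,x_N$. Then $$\lim_{N\to\infty}\frac{1}{N}X_NX_N^T=\frac{1}{2}I_2.$$ In particular, $\|X_NX_N^T-\frac{N}{2}I_2\|=o(N)$ as $N\to\infty$.
   Context: $S(N,2)$ denotes the collection of all ordered multisets of $N$ unit-norm vectors in $\mathbb{R}^2$, and for $0<p<\infty$, $\mathrm{FP}_{p,N,2}(X)=\sum_{k=1}^N\sum_{\ell\neq k}|\langle x_k,x_\ell\rangle|^p$. $I_2$ is the $2\times 2$ identity matrix. *)

theory Defs
  imports "HOL-Analysis.Analysis" "HOL-Library.Landau_Symbols"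
begin

text \<open>An element of S(N,2): an ordered N-tuple (indexed by 0..N-1) of unit vectors in R^2.
  Values at indices k >= N are irrelevant.\<close>
definition unit_configs :: "nat \<Rightarrow> (nat \<Rightarrow> real^2) set" where
  "unit_configs N = {X. \<forall>k<N. norm (X k) = 1}"

definition frame_potential :: "real \<Rightarrow> nat \<Rightarrow> (nat \<Rightarrow> real^2) \<Rightarrow> real" where
  "frame_potential p N X = (\<Sum>k<N. \<Sum>l\<in>{..<N} - {k}. \<bar>X k \<bullet> X l\<bar> powr p)"

text \<open>The 2x2 matrix X X^T where X is the 2xN matrix with columns x_1..x_N.\<close>
definition frame_operator :: "nat \<Rightarrow> (nat \<Rightarrow> real^2) \<Rightarrow> real^2^2" where
  "frame_operator N X = (\<chi> i j. \<Sum>k<N. X k $ i * X k $ j)"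

end

theory Submission
  imports Defs "HOL-Real_Asymp.Real_Asymp"
begin

text \<open>For unit vectors the squared Frobenius deviation of the frame operator is
  ||X X^T - (N/2) I||^2 = sum_{k,l} <x_k, x_l>^2 - N^2/2, and since t^2 \<le> |t|^p on [-1, 1]
  for p \<le> 2, this is at most N + FP_p(X) - N^2/2. Splitting the N vectors into two
  orthogonal blocks of sizes floor(N/2) and ceil(N/2) gives potential at most (N - 1)^2/2,
  so a minimizer has deviation at most 1/sqrt 2, uniformly in N.\<close>

lemma power2_norm_matrix:
  fixes M :: "real^'n^'m"
  shows "(norm M)\<^sup>2 = (\<Sum>i\<in>UNIV. \<Sum>j\<in>UNIV. (M $ i $ j)\<^sup>2)"
  unfolding power2_norm_eq_inner by (simp add: inner_vec_def power2_eq_square)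

lemma power2_norm_minus_scaleR_mat1:
  fixes M :: "real^'n^'n"
  shows "(norm (M - c *\<^sub>R mat 1))\<^sup>2 = (norm M)\<^sup>2 - 2 * c * trace M + c\<^sup>2 * CARD('n)"
proof -
  have "M \<bullet> mat 1 = trace M"
    by (simp add: inner_vec_def trace_def mat_def if_distrib cong: if_cong)
  moreover have "(norm (mat 1 :: real^'n^'n))\<^sup>2 = CARD('n)"
    by (simp add: power2_norm_matrix mat_def if_distrib[where f="\<lambda>x. x^2"] cong: if_cong)
  ultimately show ?thesis
    using dot_norm_neg[of M "c *\<^sub>R mat 1"] by (simp add: power_mult_distrib field_simps)
qed

lemma power2_norm_frame_operator:
  "(norm (frame_operator N X))\<^sup>2 = (\<Sum>k<N. \<Sum>l<N. (X k \<bullet> X l)\<^sup>2)"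
proof -
  have "(\<Sum>k<N. \<Sum>l<N. (X k \<bullet> X l)\<^sup>2) =
        (\<Sum>k<N. \<Sum>l<N. \<Sum>i\<in>UNIV. \<Sum>j\<in>UNIV. X k $ i * X k $ j * (X l $ i * X l $ j))"
    by (simp add: inner_vec_def power2_eq_square sum_product mult_ac)
  also have "\<dots> = (\<Sum>i\<in>UNIV. \<Sum>j\<in>UNIV. \<Sum>k<N. \<Sum>l<N. X k $ i * X k $ j * (X l $ i * X l $ j))"
    by (simp only: sum.swap[where A="{..<N}" and B=UNIV])
  also have "\<dots> = (norm (frame_operator N X))\<^sup>2"
    unfolding power2_norm_matrix by (simp add: frame_operator_def power2_eq_square sum_product)
  finally show ?thesis ..
qed

lemma trace_frame_operator: "trace (frame_operator N X) = (\<Sum>k<N. (norm (X k))\<^sup>2)"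
  by (simp add: trace_def frame_operator_def power2_norm_eq_inner inner_vec_def sum.swap[where B=UNIV])

lemma power2_norm_frame_operator_deviation:
  assumes "X \<in> unit_configs N"
  shows "(norm (frame_operator N X - (real N / 2) *\<^sub>R mat 1))\<^sup>2
           = (\<Sum>k<N. \<Sum>l<N. (X k \<bullet> X l)\<^sup>2) - (real N)\<^sup>2 / 2"
proof -
  have "trace (frame_operator N X) = real N"
    using assms by (simp add: trace_frame_operator unit_configs_def)
  then show ?thesis
    using power2_norm_minus_scaleR_mat1[of "frame_operator N X" "real N / 2"]
    unfolding power2_norm_frame_operator[symmetric] by (simp add: power2_eq_square)
qed

lemma power2_le_abs_powr:
  fixes t p :: real
  assumes "\<bar>t\<bar> \<le> 1" "p \<le> 2"
  shows "t\<^sup>2 \<le> \<bar>t\<bar> powr p"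
proof (cases "t = 0")
  case False
  then have "t\<^sup>2 = \<bar>t\<bar> powr 2" by (simp add: powr_numeral)
  also have "\<dots> \<le> \<bar>t\<bar> powr p" using assms by (intro powr_mono') auto
  finally show ?thesis .
qed simp

lemma sum_power2_inner_le_frame_potential:
  assumes X: "X \<in> unit_configs N" and "p \<le> 2"
  shows "(\<Sum>k<N. \<Sum>l<N. (X k \<bullet> X l)\<^sup>2) \<le> real N + frame_potential p N X"
proof -
  have "(\<Sum>l<N. (X k \<bullet> X l)\<^sup>2) \<le> 1 + (\<Sum>l\<in>{..<N} - {k}. \<bar>X k \<bullet> X l\<bar> powr p)"
    if "k < N" for k
  proof -
    have "(\<Sum>l<N. (X k \<bullet> X l)\<^sup>2) = (X k \<bullet> X k)\<^sup>2 + (\<Sum>l\<in>{..<N} - {k}. (X k \<bullet> X l)\<^sup>2)"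
      using \<open>k < N\<close> by (simp add: sum.remove)
    also have "(X k \<bullet> X k)\<^sup>2 = 1"
      using X \<open>k < N\<close> by (simp add: unit_configs_def norm_eq_1)
    also have "(\<Sum>l\<in>{..<N} - {k}. (X k \<bullet> X l)\<^sup>2) \<le> (\<Sum>l\<in>{..<N} - {k}. \<bar>X k \<bullet> X l\<bar> powr p)"
    proof (intro sum_mono power2_le_abs_powr[OF _ \<open>p \<le> 2\<close>])
      fix l assume "l \<in> {..<N} - {k}"
      then show "\<bar>X k \<bullet> X l\<bar> \<le> 1"
        using X \<open>k < N\<close> Cauchy_Schwarz_ineq2[of "X k" "X l"] by (simp add: unit_configs_def)
    qed
    finally show ?thesis by simp
  qed
  then have "(\<Sum>k<N. \<Sum>l<N. (X k \<bullet> X l)\<^sup>2) \<le> (\<Sum>k<N. 1 + (\<Sum>l\<in>{..<N} - {k}. \<bar>X k \<bullet> X l\<bar> powr p))"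
    by (intro sum_mono) simp
  then show ?thesis by (simp add: sum.distrib frame_potential_def)
qed

definition two_block_config :: "nat \<Rightarrow> nat \<Rightarrow> real^2" where
  "two_block_config m k = (if k < m then axis 1 1 else axis 2 1)"

lemma two_block_config_unit: "two_block_config m \<in> unit_configs N"
  by (simp add: unit_configs_def two_block_config_def)

lemma frame_potential_two_block_config:
  assumes "m \<le> N"
  shows "frame_potential p N (two_block_config m)
           = real m * (real m - 1) + (real N - real m) * (real N - real m - 1)"
proof -
  have inner: "\<bar>two_block_config m k \<bullet> two_block_config m l\<bar> powr p = of_bool ((l < m) = (k < m))"
    for k l by (simp add: two_block_config_def inner_axis_axis)
  have block: "({..<N} - {k}) \<inter> {l. (l < m) = (k < m)} = (if k < m then {..<m} else {m..<N}) - {k}"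
    if "k < N" for k
    using that assms by auto
  have "frame_potential p N (two_block_config m)
          = (\<Sum>k<N. if k < m then real m - 1 else real N - real m - 1)"
    unfolding frame_potential_def inner
    by (intro sum.cong) (auto simp: block of_nat_diff)
  also have "\<dots> = (\<Sum>k<m. real m - 1) + (\<Sum>k\<in>{m..<N}. real N - real m - 1)"
  proof -
    have "{..<N} = {..<m} \<union> {m..<N}" using assms by auto
    then show ?thesis by (simp add: sum.union_disjoint ivl_disj_int)
  qed
  finally show ?thesis using assms by (simp add: of_nat_diff)
qed

lemma frame_potential_two_block_config_half:
  "frame_potential p N (two_block_config (N div 2)) \<le> (real N - 1)\<^sup>2 / 2"
proof -
  have "N = 2 * (N div 2) \<or> N = 2 * (N div 2) + 1" by presburger
  then have "real N = 2 * real (N div 2) \<or> real N = 2 * real (N div 2) + 1"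
    by (metis of_nat_Suc of_nat_mult of_nat_numeral Suc_eq_plus1 add.commute)
  then show ?thesis
    by (auto simp: frame_potential_two_block_config algebra_simps power2_eq_square)
qed

lemma norm_frame_operator_deviation_le:
  assumes "p \<le> 2" and X: "X \<in> unit_configs N"
    and min: "\<forall>Y\<in>unit_configs N. frame_potential p N X \<le> frame_potential p N Y"
  shows "norm (frame_operator N X - (real N / 2) *\<^sub>R mat 1) \<le> 1"
proof -
  have potential_le: "frame_potential p N X \<le> (real N - 1)\<^sup>2 / 2"
    using order_trans[OF min[rule_format, OF two_block_config_unit]
                         frame_potential_two_block_config_half] .
  have "(norm (frame_operator N X - (real N / 2) *\<^sub>R mat 1))\<^sup>2
          = (\<Sum>k<N. \<Sum>l<N. (X k \<bullet> X l)\<^sup>2) - (real N)\<^sup>2 / 2"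
    by (rule power2_norm_frame_operator_deviation[OF X])
  also have "\<dots> \<le> real N + frame_potential p N X - (real N)\<^sup>2 / 2"
    using sum_power2_inner_le_frame_potential[OF X \<open>p \<le> 2\<close>] by simp
  also have "\<dots> \<le> real N + (real N - 1)\<^sup>2 / 2 - (real N)\<^sup>2 / 2"
    using potential_le by simp
  also have "\<dots> \<le> 1\<^sup>2"
    by (simp add: power2_eq_square field_simps)
  finally show ?thesis
    by (rule power2_le_imp_le) simp
qed

lemma bounded_deviation_imp_asymptotics:
  fixes S :: "nat \<Rightarrow> 'a::real_normed_vector"
  assumes "eventually (\<lambda>N. norm (S N - real N *\<^sub>R A) \<le> C) sequentially"
  shows "(\<lambda>N. norm (S N - real N *\<^sub>R A)) \<in> o(\<lambda>N. real N)"
    and "(\<lambda>N. (1 / real N) *\<^sub>R S N) \<longlonglongrightarrow> A"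
proof -
  have "(\<lambda>N. norm (S N - real N *\<^sub>R A)) \<in> O(\<lambda>_. 1)"
    using assms by (intro bigoI[of _ C]) (auto elim: eventually_mono)
  also have "(\<lambda>_. 1) \<in> o(\<lambda>N. real N)"
    by real_asymp
  finally show small: "(\<lambda>N. norm (S N - real N *\<^sub>R A)) \<in> o(\<lambda>N. real N)" .
  have "(\<lambda>N. norm ((1 / real N) *\<^sub>R S N - A)) \<longlonglongrightarrow> 0"
  proof (rule Lim_transform_eventually[OF smalloD_tendsto[OF small]])
    show "\<forall>\<^sub>F N in sequentially. norm (S N - real N *\<^sub>R A) / real N = norm ((1 / real N) *\<^sub>R S N - A)"
      using eventually_gt_at_top[of "0::nat"]
    proof eventually_elim
      case (elim N)
      then have "(1 / real N) *\<^sub>R S N - A = (1 / real N) *\<^sub>R (S N - real N *\<^sub>R A)"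
        by (simp add: scaleR_diff_right)
      then show ?case by (simp add: divide_inverse mult.commute)
    qed
  qed
  then show "(\<lambda>N. (1 / real N) *\<^sub>R S N) \<longlonglongrightarrow> A"
    by (simp add: tendsto_norm_zero_iff LIM_zero_iff)
qed

theorem theorem3p2:
  fixes p :: real and X :: "nat \<Rightarrow> nat \<Rightarrow> real^2"
  assumes "0 < p" and "p < 2"
    and "\<And>N. N \<ge> 2 \<Longrightarrow> X N \<in> unit_configs N \<and>
            (\<forall>Y\<in>unit_configs N. frame_potential p N (X N) \<le> frame_potential p N Y)"
  shows "((\<lambda>N. (1 / real N) *\<^sub>R frame_operator N (X N)) \<longlonglongrightarrow> (1/2) *\<^sub>R mat 1)
         \<and> (\<lambda>N. norm (frame_operator N (X N) - (real N / 2) *\<^sub>R mat 1)) \<in> o(\<lambda>N. real N)"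
proof -
  have "(real N / 2) *\<^sub>R mat 1 = real N *\<^sub>R ((1/2) *\<^sub>R mat 1 :: real^2^2)" for N
    by simp
  moreover have "eventually (\<lambda>N. norm (frame_operator N (X N) - (real N / 2) *\<^sub>R mat 1) \<le> 1) sequentially"
    using eventually_ge_at_top[of "2::nat"]
  proof eventually_elim
    case (elim N)
    with assms(2,3) show ?case
      by (intro norm_frame_operator_deviation_le[of p]) auto
  qed
  ultimately show ?thesis
    using bounded_deviation_imp_asymptotics[of "\<lambda>N. frame_operator N (X N)" "(1/2) *\<^sub>R mat 1" 1]
    by simp
qed

end
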